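(* Assume the finite-sum setting, the interpolation assumption, and that each $f_i$ is $L_i$-smooth. Let $(x_n)$ be generated by SGD with batch size $K$. (i) If $f$ is convex and $s=\frac{1}{2L_{(K)}}$, define $\bar x_0=x_0$ and $\bar x_{n+1}=\frac{2}{n+1}x_n+\frac{n-1}{n+1}\bar x_n$. Then $f(\bar x_n)-f^\ast\overset{a.s.}{=}o(1/n)$. (ii) If $f$ is $\mu$-strongly convex and $s=\frac{1}{L_{(K)}}$, then for every $\varepsilon'>0$, $f(x_n)-f^\ast\overset{a.s.}{=}o((q+\varepsilon')^n)$ with $q:=1-\frac{\mu}{L_{(K)}}$.
   Context: Finite-sum setting: $N\ge 2$, $f_1,\dots,f_N:\mathbb{R}^d\to\mathbb{R}$ continuously differentiable, $f=\frac1N\sum_i f_i$, $f^\ast=\min f$ (attained); only $f$ is assumed (strongly) convex. For $K\in\{1,\dots,N\}$, $B$ is a uniformly random subset of $\{1,\dots,N\}$ of size $K$ and $\tilde\nabla_K(x)=\frac1K\sum_{i\in B}\nabla f_i(x)$. Interpolation: some $x^\ast\in\arg\min f$ lies in $\arg\min f_i$ for all $i$. Each $\nabla f_i$ is $L_i$-Lipschitz and $L_{(K)}:=\max_{|B|=K}\frac1K\sum_{i\in B}L_i$. SGD: $x_{n+1}=x_n-s\tilde\nabla_K(x_n)$ with independent batches. Notation: for a positive sequence $a_n$, $u_n\overset{a.s.}{=}o(a_n)$ means there is an event $A$ of probability one such that for every $\omega\in A$ and every $\epsilon>0$ there is $n_0$ with $|u_n(\omega)|\le\epsilon a_n$ for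 all $n\ge n_0$. *)

theory Defs
  imports "HOL-Probability.Probability"
begin

definition batches :: "nat \<Rightarrow> nat \<Rightarrow> nat set set" where
  "batches N K = {B. B \<subseteq> {1..N} \<and> card B = K}"

definition batch_grad :: "(nat \<Rightarrow> 'v::euclidean_space \<Rightarrow> 'v) \<Rightarrow> nat \<Rightarrow> nat set \<Rightarrow> 'v \<Rightarrow> 'v" where
  "batch_grad g K B x = (1 / real K) *\<^sub>R (\<Sum>i\<in>B. g i x)"

definition LK :: "(nat \<Rightarrow> real) \<Rightarrow> nat \<Rightarrow> nat \<Rightarrow> real" where
  "LK L N K = Max ((\<lambda>B. (\<Sum>i\<in>B. L i) / real K) ` batches N K)"

primrec sgd :: "(nat \<Rightarrow> 'v::euclidean_space \<Rightarrow> 'v) \<Rightarrow> nat \<Rightarrow> real \<Rightarrow> 'v \<Rightarrow> (nat \<Rightarrow> 'w \<Rightarrow> nat set)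
                 \<Rightarrow> nat \<Rightarrow> 'w \<Rightarrow> 'v" where
  "sgd g K s x0 B 0 \<omega> = x0"
| "sgd g K s x0 B (Suc n) \<omega> =
     sgd g K s x0 B n \<omega> - s *\<^sub>R batch_grad g K (B n \<omega>) (sgd g K s x0 B n \<omega>)"

primrec avg_seq :: "(nat \<Rightarrow> 'v::real_vector) \<Rightarrow> nat \<Rightarrow> 'v" where
  "avg_seq x 0 = x 0"
| "avg_seq x (Suc n) =
     (2 / (real n + 1)) *\<^sub>R x n + ((real n - 1) / (real n + 1)) *\<^sub>R avg_seq x n"

definition little_o_seq :: "(nat \<Rightarrow> real) \<Rightarrow> (nat \<Rightarrow> real) \<Rightarrow> bool" where
  "little_o_seq u a \<longleftrightarrow> (\<forall>\<epsilon>>0. \<forall>\<^sub>F n in sequentially. \<bar>u n\<bar> \<le> \<epsilon> * a n)"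

definition strongly_convex :: "('v::real_normed_vector \<Rightarrow> real) \<Rightarrow> real \<Rightarrow> bool" where
  "strongly_convex F \<mu> \<longleftrightarrow> convex_on UNIV (\<lambda>x. F x - \<mu> / 2 * (norm x)\<^sup>2)"

end

theory Submission
  imports Defs
begin

text \<open>Interpolation makes x* a common minimiser of all f_i, hence of every mini-batch objective
  f_B, and smoothness of f_B gives |grad f_B(x)|^2 <= 2 L_(K) (f_B(x) - f_B(x*)). Averaging over
  the uniformly drawn batch yields
    E |x_(n+1) - x*|^2 <= |x_n - x*|^2 - 2s <grad f(x_n), x_n - x*> + 2 L_(K) s^2 (f(x_n) - f*).
  For s = 1/(2 L_(K)) convexity turns this into sum_n E (f(x_n) - f*) < oo; for s = 1/L_(K)
  strong convexity gives E |x_n - x*|^2 <= q^n |x_0 - x*|^2, so sum_n E (f(x_n) - f*) / (q + e')^n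
  < oo. Non-negative random variables with finite expected sum are almost surely summable. The
  averaged iterate is the convex combination of x_0, ..., x_(n-1) with weights proportional to k,
  and Kronecker's lemma turns summability of f(x_k) - f* into o(1/n) for it.\<close>

section \<open>Uniformly drawn batches\<close>

lemma finite_batches: "finite (batches N K)"
  unfolding batches_def by (rule finite_subset[of _ "Pow {1..N}"]) auto

lemma batches_nonempty: "K \<le> N \<Longrightarrow> batches N K \<noteq> {}"
proof -
  assume "K \<le> N"
  then have "{1..K} \<in> batches N K" unfolding batches_def by auto
  then show ?thesis by blast
qed

lemma card_batches: "card (batches N K) = N choose K"
  unfolding batches_def using n_subsets[of "{1..N}" K] by simp

lemma card_batches_containing:
  assumes i: "i \<in> {1..N}" and K: "0 < K"
  shows "card {c \<in> batches N K. i \<in> c} = (N - 1) choose (K - 1)"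
proof -
  let ?S = "{c. c \<subseteq> {1..N} - {i} \<and> card c = K - 1}"
  have "insert i ` ?S = {c \<in> batches N K. i \<in> c}"
  proof (intro equalityI subsetI)
    fix c assume "c \<in> insert i ` ?S"
    then obtain b where b: "b \<subseteq> {1..N} - {i}" "card b = K - 1" "c = insert i b" by auto
    then have "finite b" "i \<notin> b" by (auto intro: finite_subset)
    then show "c \<in> {c \<in> batches N K. i \<in> c}"
      using b i K by (auto simp: batches_def)
  next
    fix c assume c: "c \<in> {c \<in> batches N K. i \<in> c}"
    then have "finite c" by (auto simp: batches_def intro: finite_subset)
    with c have "c - {i} \<in> ?S" by (auto simp: batches_def)
    moreover have "c = insert i (c - {i})" using c by auto
    ultimately show "c \<in> insert i ` ?S" by blast
  qed
  moreover have "inj_on (insert i) ?S" unfolding inj_on_def by auto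
  ultimately have "card {c \<in> batches N K. i \<in> c} = card ?S"
    using card_image by fastforce
  also have "\<dots> = (N - 1) choose (K - 1)"
    using n_subsets[of "{1..N} - {i}" "K - 1"] i by simp
  finally show ?thesis .
qed

lemma sum_sum_batches:
  fixes h :: "nat \<Rightarrow> 'a::real_vector"
  assumes "1 \<le> K"
  shows "(\<Sum>c\<in>batches N K. \<Sum>i\<in>c. h i) = real ((N - 1) choose (K - 1)) *\<^sub>R (\<Sum>i=1..N. h i)"
proof -
  have "(\<Sum>i\<in>c. h i) = (\<Sum>i=1..N. if i \<in> c then h i else 0)" if "c \<in> batches N K" for c
    using sum.inter_restrict[of "{1..N}" h c] that by (simp add: batches_def Int_absorb1)
  then have "(\<Sum>c\<in>batches N K. \<Sum>i\<in>c. h i) = (\<Sum>c\<in>batches N K. \<Sum>i=1..N. if i \<in> c then h i else 0)"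
    by (rule sum.cong[OF refl])
  also have "\<dots> = (\<Sum>i=1..N. \<Sum>c\<in>batches N K. if i \<in> c then h i else 0)"
    by (rule sum.swap)
  also have "\<dots> = (\<Sum>i=1..N. real (card {c \<in> batches N K. i \<in> c}) *\<^sub>R h i)"
    by (simp add: sum.inter_filter[OF finite_batches, symmetric] sum_constant_scaleR)
  also have "\<dots> = real ((N - 1) choose (K - 1)) *\<^sub>R (\<Sum>i=1..N. h i)"
    using assms by (simp add: card_batches_containing scaleR_sum_right)
  finally show ?thesis .
qed

lemma sum_batch_averages:
  fixes h :: "nat \<Rightarrow> 'a::real_vector"
  assumes "1 \<le> K" "K \<le> N"
  shows "(\<Sum>c\<in>batches N K. (1 / real K) *\<^sub>R (\<Sum>i\<in>c. h i))
       = real (card (batches N K)) *\<^sub>R ((1 / real N) *\<^sub>R (\<Sum>i=1..N. h i))"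
proof -
  have "real (K * (N choose K)) = real (N * ((N - 1) choose (K - 1)))"
    using assms by (subst times_binomial_minus1_eq) auto
  then have "real ((N - 1) choose (K - 1)) / real K = real (N choose K) / real N"
    using assms by (simp add: field_simps)
  then show ?thesis
    by (simp add: scaleR_sum_right[symmetric] sum_sum_batches[OF assms(1)] card_batches)
qed

section \<open>Smooth and convex functions\<close>

lemma descent_lemma:
  fixes \<phi> :: "'v::real_inner \<Rightarrow> real"
  assumes deriv: "\<And>z. (\<phi> has_derivative (\<lambda>h. G z \<bullet> h)) (at z)"
    and lipschitz: "\<And>z w. norm (G z - G w) \<le> L * norm (z - w)"
  shows "\<phi> y \<le> \<phi> x + G x \<bullet> (y - x) + L / 2 * (norm (y - x))\<^sup>2"
proof -
  define h where "h = y - x"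
  define \<psi> where "\<psi> t = \<phi> (x + t *\<^sub>R h) - t * (G x \<bullet> h) - L / 2 * t\<^sup>2 * (norm h)\<^sup>2" for t
  define \<psi>' where "\<psi>' t = G (x + t *\<^sub>R h) \<bullet> h - G x \<bullet> h - L * t * (norm h)\<^sup>2" for t
  have "(\<psi> has_real_derivative \<psi>' t) (at t)" for t
  proof -
    have "((\<lambda>t. x + t *\<^sub>R h) has_derivative (\<lambda>u. u *\<^sub>R h)) (at t)"
      by (auto intro!: derivative_eq_intros)
    from has_derivative_compose[OF this deriv]
    have "((\<lambda>t. \<phi> (x + t *\<^sub>R h)) has_real_derivative G (x + t *\<^sub>R h) \<bullet> h) (at t)"
      unfolding has_field_derivative_def by (rule has_derivative_eq_rhs) (auto simp: fun_eq_iff)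
    then show ?thesis
      unfolding \<psi>_def \<psi>'_def by (auto intro!: derivative_eq_intros)
  qed
  then obtain t where t: "0 < t" "t < 1" "\<psi> 1 - \<psi> 0 = \<psi>' t"
    using MVT2[of 0 1 \<psi> \<psi>'] by auto
  have "(G (x + t *\<^sub>R h) - G x) \<bullet> h \<le> norm (G (x + t *\<^sub>R h) - G x) * norm h"
    by (rule norm_cauchy_schwarz)
  also have "\<dots> \<le> L * t * (norm h)\<^sup>2"
    using mult_right_mono[OF lipschitz[of "x + t *\<^sub>R h" x] norm_ge_zero, of h] t
    by (simp add: power2_eq_square mult.assoc)
  finally have "\<psi>' t \<le> 0"
    unfolding \<psi>'_def by (simp add: inner_diff_left)
  then show ?thesis
    using t unfolding \<psi>_def h_def by simp
qed

text \<open>The gradient step \<open>x - G x / L\<close> cannot go below the minimum.\<close>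
lemma gradient_norm_sq_le_gap:
  fixes \<phi> :: "'v::real_inner \<Rightarrow> real"
  assumes deriv: "\<And>z. (\<phi> has_derivative (\<lambda>h. G z \<bullet> h)) (at z)"
    and lipschitz: "\<And>z w. norm (G z - G w) \<le> L * norm (z - w)"
    and min: "\<And>z. \<phi> x\<^sub>0 \<le> \<phi> z" and L: "0 < L"
  shows "(norm (G x))\<^sup>2 \<le> 2 * L * (\<phi> x - \<phi> x\<^sub>0)"
proof -
  define y where "y = x - (1 / L) *\<^sub>R G x"
  have "\<phi> x\<^sub>0 \<le> \<phi> y" by (rule min)
  also have "\<phi> y \<le> \<phi> x + G x \<bullet> (y - x) + L / 2 * (norm (y - x))\<^sup>2"
    by (rule descent_lemma[OF deriv lipschitz])
  also have "\<dots> = \<phi> x - (norm (G x))\<^sup>2 / (2 * L)"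
    using L unfolding y_def by (simp add: power2_norm_eq_inner power_mult_distrib field_simps power2_eq_square[of L])
  finally show ?thesis
    using L by (simp add: field_simps)
qed

lemma convex_on_gradient_inequality:
  fixes \<phi> :: "'v::real_normed_vector \<Rightarrow> real"
  assumes convex: "convex_on UNIV \<phi>" and deriv: "(\<phi> has_derivative D) (at x)"
  shows "\<phi> x + D (y - x) \<le> \<phi> y"
proof -
  define h where "h = y - x"
  define \<psi> where "\<psi> t = \<phi> (x + t *\<^sub>R h)" for t
  have "convex_on UNIV \<psi>"
  proof (rule convex_onI)
    fix u a b :: real
    have "x + ((1 - u) * a + u * b) *\<^sub>R h = (1 - u) *\<^sub>R (x + a *\<^sub>R h) + u *\<^sub>R (x + b *\<^sub>R h)"
      by (simp add: algebra_simps)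
    moreover assume "0 < u" "u < 1"
    ultimately show "\<psi> ((1 - u) *\<^sub>R a + u *\<^sub>R b) \<le> (1 - u) * \<psi> a + u * \<psi> b"
      using convex_onD[OF convex, of u "x + a *\<^sub>R h" "x + b *\<^sub>R h"] unfolding \<psi>_def by simp
  qed simp
  have "((\<lambda>t. x + t *\<^sub>R h) has_derivative (\<lambda>u. u *\<^sub>R h)) (at 0)"
    by (auto intro!: derivative_eq_intros)
  moreover have "(\<phi> has_derivative D) (at (x + 0 *\<^sub>R h))"
    using deriv by simp
  ultimately have "(\<psi> has_real_derivative D h) (at 0)"
    unfolding \<psi>_def has_field_derivative_def
    by (rule has_derivative_eq_rhs[OF has_derivative_compose])
       (simp_all add: fun_eq_iff linear_scale[OF has_derivative_linear[OF deriv]] mult.commute)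
  then have "(\<psi> has_real_derivative D h) (at 0 within UNIV)" by simp
  then have "D h * (1 - 0) \<le> \<psi> 1 - \<psi> 0"
    by (intro convex_on_imp_above_tangent[OF \<open>convex_on UNIV \<psi>\<close>]) simp_all
  then show ?thesis
    unfolding \<psi>_def h_def by simp
qed

lemma strongly_convex_gradient_inequality:
  fixes \<phi> :: "'v::real_inner \<Rightarrow> real"
  assumes convex: "strongly_convex \<phi> \<mu>" and deriv: "(\<phi> has_derivative (\<lambda>h. G \<bullet> h)) (at x)"
  shows "\<phi> x + G \<bullet> (y - x) + \<mu> / 2 * (norm (y - x))\<^sup>2 \<le> \<phi> y"
proof -
  have "((\<lambda>x. \<phi> x - \<mu> / 2 * (x \<bullet> x)) has_derivative (\<lambda>h. G \<bullet> h - \<mu> / 2 * (x \<bullet> h + h \<bullet> x))) (at x)"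
    by (auto intro!: derivative_eq_intros deriv)
  with convex have "\<phi> x - \<mu> / 2 * (x \<bullet> x) + (G \<bullet> (y - x) - \<mu> / 2 * (x \<bullet> (y - x) + (y - x) \<bullet> x))
      \<le> \<phi> y - \<mu> / 2 * (y \<bullet> y)"
    unfolding strongly_convex_def power2_norm_eq_inner by (rule convex_on_gradient_inequality)
  then show ?thesis
    by (simp add: power2_norm_eq_inner inner_diff_left inner_diff_right inner_commute algebra_simps)
qed

section \<open>Means over batch sequences\<close>

text \<open>The mean of \<open>H\<close> over the first \<open>n\<close> draws from \<open>S\<close>, i.e.\ its expectation when the draws are
  independent and uniform (\<open>nn_integral_prefix_function\<close>). Paths in \<open>PiE\<close> are \<open>undefined\<close>
  from \<open>n\<close> on, which is why \<open>H\<close> is later required to depend on its first \<open>n\<close> entries only.\<close>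
definition path_mean :: "'a set \<Rightarrow> nat \<Rightarrow> ((nat \<Rightarrow> 'a) \<Rightarrow> real) \<Rightarrow> real" where
  "path_mean S n H = (\<Sum>v\<in>PiE {..<n} (\<lambda>_. S). H v) / real (card S) ^ n"

lemma sum_PiE_lessThan_Suc:
  assumes "finite S"
  shows "(\<Sum>v\<in>PiE {..<Suc n} (\<lambda>_. S). h v) = (\<Sum>v\<in>PiE {..<n} (\<lambda>_. S). \<Sum>c\<in>S. h (v(n := c)))"
proof -
  have "PiE {..<Suc n} (\<lambda>_. S) = (\<lambda>(c, v). v(n := c)) ` (S \<times> PiE {..<n} (\<lambda>_. S))"
    using PiE_insert_eq[of n "{..<n}" "\<lambda>_. S"] by (simp add: lessThan_Suc)
  moreover have "inj_on (\<lambda>(c, v). v(n := c)) (S \<times> PiE {..<n} (\<lambda>_. S))"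
    using inj_combinator[of n "{..<n}" "\<lambda>_. S"] by simp
  ultimately have "(\<Sum>v\<in>PiE {..<Suc n} (\<lambda>_. S). h v) = (\<Sum>(c, v)\<in>S \<times> PiE {..<n} (\<lambda>_. S). h (v(n := c)))"
    by (simp add: sum.reindex case_prod_unfold)
  also have "\<dots> = (\<Sum>v\<in>PiE {..<n} (\<lambda>_. S). \<Sum>c\<in>S. h (v(n := c)))"
    by (simp add: sum.cartesian_product[symmetric] sum.swap[of _ S])
  finally show ?thesis .
qed

lemma path_mean_0: "path_mean S 0 H = H (\<lambda>_. undefined)"
  by (simp add: path_mean_def)

lemma path_mean_Suc:
  "finite S \<Longrightarrow> path_mean S (Suc n) H = path_mean S n (\<lambda>v. (\<Sum>c\<in>S. H (v(n := c))) / real (card S))"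
  by (simp add: path_mean_def sum_PiE_lessThan_Suc sum_divide_distrib[symmetric] field_simps)

lemma path_mean_mono:
  "(\<And>v. v \<in> PiE {..<n} (\<lambda>_. S) \<Longrightarrow> H v \<le> G v) \<Longrightarrow> path_mean S n H \<le> path_mean S n G"
  unfolding path_mean_def by (intro divide_right_mono sum_mono) auto

lemma path_mean_nonneg:
  "(\<And>v. v \<in> PiE {..<n} (\<lambda>_. S) \<Longrightarrow> 0 \<le> H v) \<Longrightarrow> 0 \<le> path_mean S n H"
  unfolding path_mean_def by (intro divide_nonneg_nonneg sum_nonneg) auto

lemma path_mean_diff: "path_mean S n (\<lambda>v. H v - G v) = path_mean S n H - path_mean S n G"
  by (simp add: path_mean_def sum_subtractf diff_divide_distrib)

lemma path_mean_cmult: "path_mean S n (\<lambda>v. a * H v) = a * path_mean S n H"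
  by (simp add: path_mean_def sum_distrib_left)

primrec sgd_path ::
  "(nat \<Rightarrow> 'v::euclidean_space \<Rightarrow> 'v) \<Rightarrow> nat \<Rightarrow> real \<Rightarrow> 'v \<Rightarrow> (nat \<Rightarrow> nat set) \<Rightarrow> nat \<Rightarrow> 'v" where
  "sgd_path g K s x0 v 0 = x0"
| "sgd_path g K s x0 v (Suc n) =
     sgd_path g K s x0 v n - s *\<^sub>R batch_grad g K (v n) (sgd_path g K s x0 v n)"

lemma sgd_eq_sgd_path: "sgd g K s x0 B n \<omega> = sgd_path g K s x0 (\<lambda>i. B i \<omega>) n"
  by (induction n) simp_all

lemma sgd_path_cong:
  "(\<And>i. i < n \<Longrightarrow> v i = w i) \<Longrightarrow> sgd_path g K s x0 v n = sgd_path g K s x0 w n"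
  by (induction n) simp_all

lemma sgd_path_fun_upd_Suc:
  "sgd_path g K s x0 (v(n := c)) (Suc n)
     = sgd_path g K s x0 v n - s *\<^sub>R batch_grad g K c (sgd_path g K s x0 v n)"
proof -
  have "sgd_path g K s x0 (v(n := c)) n = sgd_path g K s x0 v n"
    by (rule sgd_path_cong) simp
  then show ?thesis by simp
qed

section \<open>Independent uniform batches\<close>

locale iid_uniform = prob_space M for M :: "'w measure" +
  fixes X :: "nat \<Rightarrow> 'w \<Rightarrow> 'a" and S :: "'a set"
  assumes finite_S: "finite S" and S_nonempty: "S \<noteq> {}"
    and indep_X: "indep_vars (\<lambda>_. count_space UNIV) X UNIV"
    and distr_X: "\<And>n. distr M (count_space UNIV) (X n) = measure_pmf (pmf_of_set S)"
begin

lemma measurable_X [measurable]: "X i \<in> measurable M (count_space UNIV)"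
  using indep_X unfolding indep_vars_def by auto

definition prefix_event :: "nat \<Rightarrow> (nat \<Rightarrow> 'a) \<Rightarrow> 'w set" where
  "prefix_event n v = {\<omega> \<in> space M. \<forall>i<n. X i \<omega> = v i}"

lemma prefix_event_eq_INT: "0 < n \<Longrightarrow> prefix_event n v = (\<Inter>i<n. X i -` {v i} \<inter> space M)"
  unfolding prefix_event_def by auto

lemma sets_prefix_event [measurable]: "prefix_event n v \<in> sets M"
  unfolding prefix_event_def by measurable

lemma prob_X_singleton: "c \<in> S \<Longrightarrow> prob (X i -` {c} \<inter> space M) = 1 / real (card S)"
proof -
  assume "c \<in> S"
  have "prob (X i -` {c} \<inter> space M) = measure (distr M (count_space UNIV) (X i)) {c}"
    by (simp add: measure_distr)
  also have "\<dots> = 1 / real (card S)"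
    using \<open>c \<in> S\<close> finite_S S_nonempty by (simp add: distr_X measure_pmf_single)
  finally show ?thesis .
qed

lemma prob_prefix_event:
  assumes "v \<in> PiE {..<n} (\<lambda>_. S)"
  shows "prob (prefix_event n v) = 1 / real (card S) ^ n"
proof (cases "n = 0")
  case True
  then show ?thesis unfolding prefix_event_def by (simp add: prob_space)
next
  case False
  have "prob (prefix_event n v) = (\<Prod>i<n. prob (X i -` {v i} \<inter> space M))"
    unfolding prefix_event_eq_INT[OF False[unfolded neq0_conv]]
    by (rule indep_varsD[OF indep_X]) (use False in auto)
  also have "\<dots> = (\<Prod>i<n. 1 / real (card S))"
    using assms by (intro prod.cong refl prob_X_singleton) auto
  also have "\<dots> = 1 / real (card S) ^ n"
    by (simp add: power_one_over)
  finally show ?thesis .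
qed

lemma AE_X_in_S: "AE \<omega> in M. \<forall>i. X i \<omega> \<in> S"
proof (subst AE_all_countable, intro allI)
  fix i
  have "AE c in distr M (count_space UNIV) (X i). c \<in> S"
    unfolding distr_X using AE_measure_pmf[of "pmf_of_set S"] finite_S S_nonempty by simp
  then show "AE \<omega> in M. X i \<omega> \<in> S"
    by (simp add: AE_distr_iff)
qed

lemma nn_integral_prefix_function:
  assumes nonneg: "\<And>v. 0 \<le> H v"
    and prefix: "\<And>v w. (\<And>i. i < n \<Longrightarrow> v i = w i) \<Longrightarrow> H v = H w"
  obtains Z where "Z \<in> borel_measurable M" "AE \<omega> in M. Z \<omega> = ennreal (H (\<lambda>i. X i \<omega>))"
    "(\<integral>\<^sup>+\<omega>. Z \<omega> \<partial>M) = ennreal (path_mean S n H)"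
proof
  let ?V = "PiE {..<n} (\<lambda>_. S)"
  define Z where "Z \<omega> = (\<Sum>v\<in>?V. ennreal (H v) * indicator (prefix_event n v) \<omega>)" for \<omega>
  show "Z \<in> borel_measurable M"
    unfolding Z_def by measurable
  show "AE \<omega> in M. Z \<omega> = ennreal (H (\<lambda>i. X i \<omega>))"
    using AE_X_in_S AE_space
  proof eventually_elim
    case (elim \<omega>)
    define u where "u = restrict (\<lambda>i. X i \<omega>) {..<n}"
    have "u \<in> ?V" unfolding u_def using elim by auto
    have "\<omega> \<in> prefix_event n v \<longleftrightarrow> v = u" if "v \<in> ?V" for v
    proof
      assume "\<omega> \<in> prefix_event n v"
      then show "v = u"
        using PiE_arb[OF that] unfolding prefix_event_def u_def by (auto intro!: ext)
    qed (use elim in \<open>simp add: prefix_event_def u_def\<close>)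
    then have "Z \<omega> = (\<Sum>v\<in>?V. if v = u then ennreal (H v) else 0)"
      unfolding Z_def by (intro sum.cong refl) (simp add: indicator_def)
    also have "\<dots> = ennreal (H u)"
      using \<open>u \<in> ?V\<close> by (simp add: finite_PiE finite_S)
    also have "H u = H (\<lambda>i. X i \<omega>)"
      by (rule prefix) (simp add: u_def)
    finally show ?case .
  qed
  have "(\<integral>\<^sup>+\<omega>. Z \<omega> \<partial>M) = (\<Sum>v\<in>?V. ennreal (H v) * emeasure M (prefix_event n v))"
    unfolding Z_def by (simp add: nn_integral_sum nn_integral_cmult_indicator)
  also have "\<dots> = (\<Sum>v\<in>?V. ennreal (H v / real (card S) ^ n))"
    by (intro sum.cong refl) (simp add: emeasure_eq_measure prob_prefix_event ennreal_mult[symmetric] nonneg)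
  also have "\<dots> = ennreal (path_mean S n H)"
    unfolding path_mean_def by (simp add: sum_ennreal nonneg sum_divide_distrib)
  finally show "(\<integral>\<^sup>+\<omega>. Z \<omega> \<partial>M) = ennreal (path_mean S n H)" .
qed

lemma AE_summable_if_summable_path_mean:
  assumes nonneg: "\<And>n v. 0 \<le> H n v"
    and prefix: "\<And>n v w. (\<And>i. i < n \<Longrightarrow> v i = w i) \<Longrightarrow> H n v = H n w"
    and summable: "summable (\<lambda>n. path_mean S n (H n))"
  shows "AE \<omega> in M. summable (\<lambda>n. H n (\<lambda>i. X i \<omega>))"
proof -
  have "\<forall>n. \<exists>Z. Z \<in> borel_measurable M \<and> (AE \<omega> in M. Z \<omega> = ennreal (H n (\<lambda>i. X i \<omega>)))
      \<and> (\<integral>\<^sup>+\<omega>. Z \<omega> \<partial>M) = ennreal (path_mean S n (H n))"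
  proof
    fix n
    show "\<exists>Z. Z \<in> borel_measurable M \<and> (AE \<omega> in M. Z \<omega> = ennreal (H n (\<lambda>i. X i \<omega>)))
      \<and> (\<integral>\<^sup>+\<omega>. Z \<omega> \<partial>M) = ennreal (path_mean S n (H n))"
      by (rule nn_integral_prefix_function[of "H n" n]) (blast intro: nonneg prefix)+
  qed
  then obtain Z where Z: "\<And>n. Z n \<in> borel_measurable M"
    "\<And>n. AE \<omega> in M. Z n \<omega> = ennreal (H n (\<lambda>i. X i \<omega>))"
    "\<And>n. (\<integral>\<^sup>+\<omega>. Z n \<omega> \<partial>M) = ennreal (path_mean S n (H n))"
    by metis
  have "(\<integral>\<^sup>+\<omega>. (\<Sum>n. Z n \<omega>) \<partial>M) = (\<Sum>n. ennreal (path_mean S n (H n)))"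
    by (simp add: nn_integral_suminf Z(1,3))
  also have "\<dots> = ennreal (\<Sum>n. path_mean S n (H n))"
    using summable nonneg by (intro suminf_ennreal2 path_mean_nonneg) auto
  finally have "(\<integral>\<^sup>+\<omega>. (\<Sum>n. Z n \<omega>) \<partial>M) \<noteq> \<infinity>"
    by simp
  moreover have "(\<lambda>\<omega>. \<Sum>n. Z n \<omega>) \<in> borel_measurable M"
    using Z(1) by measurable
  ultimately have "AE \<omega> in M. (\<Sum>n. Z n \<omega>) \<noteq> \<infinity>"
    by (intro nn_integral_noteq_infinite)
  moreover have "AE \<omega> in M. \<forall>n. Z n \<omega> = ennreal (H n (\<lambda>i. X i \<omega>))"
    using Z(2) by (simp add: AE_all_countable)
  ultimately show ?thesis
  proof eventually_elim
    case (elim \<omega>)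
    then have "(\<Sum>n. ennreal (H n (\<lambda>i. X i \<omega>))) \<noteq> \<top>"
      by simp
    then show ?case
      by (rule summable_suminf_not_top[rotated]) (rule nonneg)
  qed
qed

end

section \<open>Rates for real sequences\<close>

lemma little_o_seq_if_tendsto_zero:
  assumes "(\<lambda>n. u n / a n) \<longlonglongrightarrow> 0" and "\<forall>\<^sub>F n in sequentially. 0 < a n"
  shows "little_o_seq u a"
  unfolding little_o_seq_def
proof (intro allI impI)
  fix \<epsilon> :: real
  assume "0 < \<epsilon>"
  with assms(1) have "\<forall>\<^sub>F n in sequentially. \<bar>u n / a n\<bar> < \<epsilon>"
    by (auto simp: tendsto_iff dist_real_def)
  with assms(2) show "\<forall>\<^sub>F n in sequentially. \<bar>u n\<bar> \<le> \<epsilon> * a n"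
    by eventually_elim (simp add: abs_divide pos_divide_less_eq)
qed

lemma kronecker_lemma:
  fixes a :: "nat \<Rightarrow> real"
  assumes nonneg: "\<And>k. 0 \<le> a k" and summable: "summable a"
  shows "(\<lambda>n. (\<Sum>k<n. real k * a k) / real n) \<longlonglongrightarrow> 0"
proof (rule order_tendstoI)
  fix \<epsilon> :: real
  assume "0 < \<epsilon>"
  then obtain M where M: "\<And>n. norm (sum a {M..<n}) < \<epsilon> / 2"
    using summable unfolding summable_Cauchy by (metis half_gt_zero order_refl)
  define C where "C = (\<Sum>k<M. real k * a k)"
  have "\<forall>\<^sub>F n in sequentially. M \<le> n \<and> 2 * C / \<epsilon> < real n"
    using eventually_ge_at_top[of M]
      filterlim_real_sequentially[THEN filterlim_at_top_dense[THEN iffD1], rule_format, of "2 * C / \<epsilon>"]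
    by eventually_elim auto
  then show "\<forall>\<^sub>F n in sequentially. (\<Sum>k<n. real k * a k) / real n < \<epsilon>"
  proof eventually_elim
    case (elim n)
    have "0 \<le> C" unfolding C_def using nonneg by (intro sum_nonneg) auto
    with \<open>0 < \<epsilon>\<close> have "0 \<le> 2 * C / \<epsilon>" by simp
    with elim have "0 < real n" by linarith
    with elim \<open>0 < \<epsilon>\<close> have n: "0 < real n" "C / real n < \<epsilon> / 2"
      by (auto simp: field_simps)
    have "(\<Sum>k<n. real k * a k) = C + (\<Sum>k=M..<n. real k * a k)"
      unfolding C_def using elim by (simp add: sum.atLeastLessThan_concat[of 0 M n, symmetric] lessThan_atLeast0)
    also have "(\<Sum>k=M..<n. real k * a k) \<le> real n * sum a {M..<n}"
      unfolding sum_distrib_left using nonneg by (intro sum_mono mult_right_mono) auto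
    also have "\<dots> \<le> real n * (\<epsilon> / 2)"
      using M[of n] nonneg by (intro mult_left_mono) (auto simp: sum_nonneg)
    finally have "(\<Sum>k<n. real k * a k) / real n \<le> (C + real n * (\<epsilon> / 2)) / real n"
      using n by (simp add: divide_right_mono)
    also have "\<dots> = C / real n + \<epsilon> / 2"
      using n by (simp add: add_divide_distrib)
    finally show ?case
      using n by linarith
  qed
next
  fix \<epsilon> :: real
  assume "\<epsilon> < 0"
  then show "\<forall>\<^sub>F n in sequentially. \<epsilon> < (\<Sum>k<n. real k * a k) / real n"
  proof (intro always_eventually allI)
    fix n
    have "0 \<le> (\<Sum>k<n. real k * a k) / real n"
      using nonneg by (intro divide_nonneg_nonneg sum_nonneg) auto
    with \<open>\<epsilon> < 0\<close> show "\<epsilon> < (\<Sum>k<n. real k * a k) / real n" by linarith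
  qed
qed


lemma avg_seq_eq_weighted_sum:
  "(real n * (real n - 1)) *\<^sub>R avg_seq x n = (\<Sum>k<n. (2 * real k) *\<^sub>R x k)"
proof (induction n)
  case (Suc n)
  have "(real (Suc n) * (real (Suc n) - 1)) * (2 / (real n + 1)) = 2 * real n"
    "(real (Suc n) * (real (Suc n) - 1)) * ((real n - 1) / (real n + 1)) = real n * (real n - 1)"
    by (simp_all add: field_simps)
  then have "(real (Suc n) * (real (Suc n) - 1)) *\<^sub>R avg_seq x (Suc n)
      = (2 * real n) *\<^sub>R x n + (real n * (real n - 1)) *\<^sub>R avg_seq x n"
    by (simp only: avg_seq.simps scaleR_add_right scaleR_scaleR)
  with Suc.IH show ?case by simp
qed simp

lemma convex_avg_seq_gap_le:
  fixes x :: "nat \<Rightarrow> 'v::real_vector"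
  assumes convex: "convex_on UNIV F" and n: "2 \<le> n"
  shows "F (avg_seq x n) - c \<le> 2 / (real n * (real n - 1)) * (\<Sum>k<n. real k * (F (x k) - c))"
proof -
  define w where "w k = 2 * real k / (real n * (real n - 1))" for k
  have pos: "0 < real n * (real n - 1)" using n by simp
  have weights: "(\<Sum>k<n. w k) = 1"
  proof -
    have "(\<Sum>k<n. 2 * real k) = real n * (real n - 1)"
      by (induction n) (simp_all add: algebra_simps)
    then show ?thesis
      unfolding w_def using pos n by (simp add: sum_divide_distrib[symmetric])
  qed
  have "F (avg_seq x n) = F ((1 / (real n * (real n - 1))) *\<^sub>R ((real n * (real n - 1)) *\<^sub>R avg_seq x n))"
    using pos n by simp
  also have "\<dots> = F (\<Sum>k<n. w k *\<^sub>R x k)"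
    unfolding avg_seq_eq_weighted_sum w_def by (simp add: scaleR_sum_right)
  also have "\<dots> \<le> (\<Sum>k<n. w k * F (x k))"
    using n pos by (intro convex_on_sum[OF _ _ convex weights]) (auto simp: w_def lessThan_empty_iff)
  finally have "F (avg_seq x n) - c \<le> (\<Sum>k<n. w k * (F (x k) - c))"
    using weights by (simp add: right_diff_distrib sum_subtractf sum_distrib_right[symmetric])
  then show ?thesis
    unfolding w_def by (simp add: sum_distrib_left mult.assoc)
qed

lemma avg_seq_little_o:
  fixes x :: "nat \<Rightarrow> 'v::real_vector"
  assumes convex: "convex_on UNIV F" and min: "\<And>y. F xs \<le> F y"
    and summable: "summable (\<lambda>n. F (x n) - F xs)"
  shows "little_o_seq (\<lambda>n. F (avg_seq x n) - F xs) (\<lambda>n. 1 / real n)"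
proof (rule little_o_seq_if_tendsto_zero)
  define R where "R n = (\<Sum>k<n. real k * (F (x k) - F xs)) / real n" for n
  have R: "R \<longlonglongrightarrow> 0"
    unfolding R_def using min summable by (intro kronecker_lemma) auto
  have upper: "\<forall>\<^sub>F n in sequentially. (F (avg_seq x n) - F xs) / (1 / real n) \<le> 4 * R n"
    using eventually_ge_at_top[of 2]
  proof eventually_elim
    case (elim n)
    have "0 \<le> R n"
      unfolding R_def using min by (intro divide_nonneg_nonneg sum_nonneg mult_nonneg_nonneg) auto
    have "(F (avg_seq x n) - F xs) / (1 / real n) = real n * (F (avg_seq x n) - F xs)"
      by simp
    also have "\<dots> \<le> real n * (2 / (real n * (real n - 1)) * (\<Sum>k<n. real k * (F (x k) - F xs)))"
      by (rule mult_left_mono[OF convex_avg_seq_gap_le[OF convex elim]]) simp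
    also have "\<dots> = 2 * real n / (real n - 1) * R n"
      using elim by (simp add: R_def field_simps)
    also have "\<dots> \<le> 4 * R n"
      using elim \<open>0 \<le> R n\<close> by (intro mult_right_mono) (auto simp: field_simps)
    finally show ?case .
  qed
  have lower: "\<forall>\<^sub>F n in sequentially. 0 \<le> (F (avg_seq x n) - F xs) / (1 / real n)"
    using min by (intro always_eventually allI) simp
  show "(\<lambda>n. (F (avg_seq x n) - F xs) / (1 / real n)) \<longlonglongrightarrow> 0"
    using tendsto_sandwich[OF lower upper tendsto_const tendsto_mult_right_zero[OF R]] by simp
  show "\<forall>\<^sub>F n in sequentially. 0 < 1 / real n"
    using eventually_gt_at_top[of 0] by eventually_elim simp
qed

section \<open>Mini-batch SGD under interpolation\<close>

locale finite_sum_interpolation =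
  fixes f :: "nat \<Rightarrow> 'v::euclidean_space \<Rightarrow> real"
    and g :: "nat \<Rightarrow> 'v \<Rightarrow> 'v"
    and L :: "nat \<Rightarrow> real"
    and N K :: nat
    and xs :: 'v
  assumes K_pos: "1 \<le> K" and K_le_N: "K \<le> N"
    and has_derivative_f: "\<And>i x. i \<in> {1..N} \<Longrightarrow> (f i has_derivative (\<lambda>h. g i x \<bullet> h)) (at x)"
    and lipschitz_g: "\<And>i x y. i \<in> {1..N} \<Longrightarrow> norm (g i x - g i y) \<le> L i * norm (x - y)"
    and interpolation: "\<And>i y. i \<in> {1..N} \<Longrightarrow> f i xs \<le> f i y"
begin

abbreviation "Bs \<equiv> batches N K"
abbreviation "L_K \<equiv> LK L N K"
abbreviation "grad_batch_F \<equiv> batch_grad g K"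

definition F :: "'v \<Rightarrow> real" where
  "F x = (1 / real N) * (\<Sum>i=1..N. f i x)"

definition grad_F :: "'v \<Rightarrow> 'v" where
  "grad_F x = (1 / real N) *\<^sub>R (\<Sum>i=1..N. g i x)"

definition batch_F :: "nat set \<Rightarrow> 'v \<Rightarrow> real" where
  "batch_F c x = (1 / real K) * (\<Sum>i\<in>c. f i x)"

lemma mem_batch_range: "c \<in> Bs \<Longrightarrow> i \<in> c \<Longrightarrow> i \<in> {1..N}"
  unfolding batches_def by auto

lemma card_batches_pos: "0 < card Bs"
  using finite_batches batches_nonempty[OF K_le_N] by (simp add: card_gt_0_iff)

lemma batch_F_has_derivative:
  assumes "c \<in> Bs"
  shows "(batch_F c has_derivative (\<lambda>h. grad_batch_F c x \<bullet> h)) (at x)"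
proof -
  have "((\<lambda>x. \<Sum>i\<in>c. f i x) has_derivative (\<lambda>h. \<Sum>i\<in>c. g i x \<bullet> h)) (at x)"
    using assms by (intro has_derivative_sum has_derivative_f mem_batch_range)
  then show ?thesis
    unfolding batch_F_def[abs_def] batch_grad_def
    by (rule has_derivative_eq_rhs[OF has_derivative_mult_right]) (simp add: fun_eq_iff inner_sum_left)
qed

lemma batch_grad_lipschitz:
  assumes c: "c \<in> Bs"
  shows "norm (grad_batch_F c x - grad_batch_F c y) \<le> L_K * norm (x - y)"
proof -
  have "norm (grad_batch_F c x - grad_batch_F c y) = norm (\<Sum>i\<in>c. g i x - g i y) / real K"
    unfolding batch_grad_def by (simp add: sum_subtractf scaleR_diff_right[symmetric])
  also have "\<dots> \<le> (\<Sum>i\<in>c. L i * norm (x - y)) / real K"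
    using c by (intro divide_right_mono order_trans[OF norm_sum sum_mono] lipschitz_g mem_batch_range) auto
  also have "\<dots> = (\<Sum>i\<in>c. L i) / real K * norm (x - y)"
    by (simp add: sum_distrib_right)
  also have "\<dots> \<le> L_K * norm (x - y)"
    unfolding LK_def using c finite_batches by (intro mult_right_mono Max_ge) auto
  finally show ?thesis .
qed

lemma batch_F_min: "c \<in> Bs \<Longrightarrow> batch_F c xs \<le> batch_F c y"
  unfolding batch_F_def by (intro mult_left_mono sum_mono interpolation mem_batch_range) auto

lemma sum_batch_grad: "(\<Sum>c\<in>Bs. grad_batch_F c x) = real (card Bs) *\<^sub>R grad_F x"
  unfolding batch_grad_def grad_F_def using sum_batch_averages[OF K_pos K_le_N] .

lemma sum_batch_F: "(\<Sum>c\<in>Bs. batch_F c x) = real (card Bs) * F x"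
  unfolding batch_F_def F_def using sum_batch_averages[OF K_pos K_le_N, of "\<lambda>i. f i x"] by simp

lemma F_has_derivative: "(F has_derivative (\<lambda>h. grad_F x \<bullet> h)) (at x)"
proof -
  have "((\<lambda>x. \<Sum>i=1..N. f i x) has_derivative (\<lambda>h. \<Sum>i=1..N. g i x \<bullet> h)) (at x)"
    by (intro has_derivative_sum has_derivative_f)
  then show ?thesis
    unfolding F_def[abs_def] grad_F_def
    by (rule has_derivative_eq_rhs[OF has_derivative_mult_right]) (simp add: fun_eq_iff inner_sum_left)
qed

lemma grad_F_lipschitz: "norm (grad_F x - grad_F y) \<le> L_K * norm (x - y)"
proof -
  have m: "0 < real (card Bs)" using card_batches_pos by simp
  have "grad_F x - grad_F y = (1 / real (card Bs)) *\<^sub>R (\<Sum>c\<in>Bs. grad_batch_F c x - grad_batch_F c y)"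
    using m by (simp add: sum_subtractf sum_batch_grad scaleR_diff_right)
  then have "norm (grad_F x - grad_F y) \<le> (\<Sum>c\<in>Bs. norm (grad_batch_F c x - grad_batch_F c y)) / real (card Bs)"
    using m by (simp add: divide_right_mono norm_sum)
  also have "\<dots> \<le> (\<Sum>c\<in>Bs. L_K * norm (x - y)) / real (card Bs)"
    using m by (intro divide_right_mono sum_mono batch_grad_lipschitz) auto
  also have "\<dots> = L_K * norm (x - y)"
    using m by simp
  finally show ?thesis .
qed

lemma F_min: "F xs \<le> F y"
  unfolding F_def by (intro mult_left_mono sum_mono interpolation) auto

lemma grad_F_xs: "grad_F xs = 0"
proof -
  have "(\<lambda>h. grad_F xs \<bullet> h) = (\<lambda>h. 0)"
    by (rule has_derivative_local_min[OF F_has_derivative]) (simp add: F_min)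
  then show ?thesis
    by (metis inner_eq_zero_iff)
qed

lemma F_gap_le: "F x - F xs \<le> L_K / 2 * (norm (x - xs))\<^sup>2"
  using descent_lemma[OF F_has_derivative grad_F_lipschitz, of x xs] by (simp add: grad_F_xs)

lemma F_constant_if_L_K_nonpos: "L_K \<le> 0 \<Longrightarrow> F x = F xs"
  using F_gap_le[of x] F_min[of x] mult_nonpos_nonneg[of "L_K / 2" "(norm (x - xs))\<^sup>2"] by simp

lemma strong_convexity_le_L_K:
  assumes "strongly_convex F \<mu>"
  shows "\<mu> \<le> L_K"
proof -
  obtain e :: 'v where e: "norm e = 1"
    using vector_choose_size[of 1] by auto
  have "F xs + \<mu> / 2 * (norm e)\<^sup>2 \<le> F (xs + e)"
    using strongly_convex_gradient_inequality[OF assms F_has_derivative, of xs "xs + e"]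
    by (simp add: grad_F_xs)
  moreover have "F (xs + e) - F xs \<le> L_K / 2 * (norm e)\<^sup>2"
    using F_gap_le[of "xs + e"] by simp
  ultimately show ?thesis
    using e by simp
qed

lemma batch_grad_norm_sq_le:
  "c \<in> Bs \<Longrightarrow> 0 < L_K \<Longrightarrow> (norm (grad_batch_F c x))\<^sup>2 \<le> 2 * L_K * (batch_F c x - batch_F c xs)"
  by (rule gradient_norm_sq_le_gap[OF batch_F_has_derivative batch_grad_lipschitz batch_F_min])

lemma mean_sq_dist_after_step:
  assumes "0 < L_K"
  shows "(\<Sum>c\<in>Bs. (norm (x - s *\<^sub>R grad_batch_F c x - xs))\<^sup>2) / real (card Bs)
     \<le> (norm (x - xs))\<^sup>2 - 2 * s * (grad_F x \<bullet> (x - xs)) + 2 * L_K * s\<^sup>2 * (F x - F xs)"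
proof -
  let ?m = "real (card Bs)"
  have m: "0 < ?m" using card_batches_pos by simp
  have expand: "(norm (x - s *\<^sub>R grad_batch_F c x - xs))\<^sup>2
      = (norm (x - xs))\<^sup>2 - 2 * s * (grad_batch_F c x \<bullet> (x - xs)) + s\<^sup>2 * (norm (grad_batch_F c x))\<^sup>2" for c
    unfolding power2_norm_eq_inner
    by (simp add: inner_diff_left inner_diff_right inner_commute power2_eq_square algebra_simps)
  have "(\<Sum>c\<in>Bs. (norm (grad_batch_F c x))\<^sup>2) \<le> (\<Sum>c\<in>Bs. 2 * L_K * (batch_F c x - batch_F c xs))"
    by (intro sum_mono batch_grad_norm_sq_le assms)
  also have "\<dots> = 2 * L_K * ?m * (F x - F xs)"
    by (simp add: sum_distrib_left[symmetric] sum_subtractf sum_batch_F algebra_simps)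
  finally have grad_sq: "s\<^sup>2 * (\<Sum>c\<in>Bs. (norm (grad_batch_F c x))\<^sup>2) \<le> s\<^sup>2 * (2 * L_K * ?m * (F x - F xs))"
    by (simp add: mult_left_mono)
  have "(\<Sum>c\<in>Bs. (norm (x - s *\<^sub>R grad_batch_F c x - xs))\<^sup>2)
      = ?m * (norm (x - xs))\<^sup>2 - 2 * s * ((\<Sum>c\<in>Bs. grad_batch_F c x) \<bullet> (x - xs))
        + s\<^sup>2 * (\<Sum>c\<in>Bs. (norm (grad_batch_F c x))\<^sup>2)"
    by (simp add: expand sum.distrib sum_subtractf sum_distrib_left inner_sum_left)
  also have "\<dots> \<le> ?m * ((norm (x - xs))\<^sup>2 - 2 * s * (grad_F x \<bullet> (x - xs)) + 2 * L_K * s\<^sup>2 * (F x - F xs))"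
    using grad_sq by (simp add: sum_batch_grad algebra_simps)
  finally show ?thesis
    using m by (simp add: pos_divide_le_eq mult.commute)
qed

lemma mean_sq_dist_after_step_convex:
  assumes convex: "convex_on UNIV F" and L_K: "0 < L_K"
  shows "(\<Sum>c\<in>Bs. (norm (x - (1 / (2 * L_K)) *\<^sub>R grad_batch_F c x - xs))\<^sup>2) / real (card Bs)
     \<le> (norm (x - xs))\<^sup>2 - (1 / (2 * L_K)) * (F x - F xs)"
proof -
  have "F x - F xs \<le> grad_F x \<bullet> (x - xs)"
    using convex_on_gradient_inequality[OF convex F_has_derivative, of x xs]
    by (simp add: inner_diff_right)
  then have "2 * (1 / (2 * L_K)) * (F x - F xs) \<le> 2 * (1 / (2 * L_K)) * (grad_F x \<bullet> (x - xs))"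
    using L_K by (intro mult_left_mono) auto
  moreover have "2 * L_K * (1 / (2 * L_K))\<^sup>2 = 1 / (2 * L_K)"
    using L_K by (simp add: power2_eq_square)
  ultimately show ?thesis
    using mean_sq_dist_after_step[OF L_K, of x "1 / (2 * L_K)"] by simp
qed

lemma mean_sq_dist_after_step_strongly_convex:
  assumes convex: "strongly_convex F \<mu>" and \<mu>: "0 < \<mu>"
  shows "(\<Sum>c\<in>Bs. (norm (x - (1 / L_K) *\<^sub>R grad_batch_F c x - xs))\<^sup>2) / real (card Bs)
     \<le> (1 - \<mu> / L_K) * (norm (x - xs))\<^sup>2"
proof -
  have L_K: "0 < L_K" using strong_convexity_le_L_K[OF convex] \<mu> by simp
  have "F x - F xs + \<mu> / 2 * (norm (x - xs))\<^sup>2 \<le> grad_F x \<bullet> (x - xs)"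
    using strongly_convex_gradient_inequality[OF convex F_has_derivative, of x xs]
    by (simp add: inner_diff_right norm_minus_commute)
  then have "2 * (1 / L_K) * (F x - F xs + \<mu> / 2 * (norm (x - xs))\<^sup>2)
      \<le> 2 * (1 / L_K) * (grad_F x \<bullet> (x - xs))"
    using L_K by (intro mult_left_mono) auto
  moreover have "2 * (1 / L_K) * (F x - F xs + \<mu> / 2 * (norm (x - xs))\<^sup>2)
      = 2 * (1 / L_K) * (F x - F xs) + \<mu> / L_K * (norm (x - xs))\<^sup>2"
    using L_K by (simp add: field_simps)
  moreover have "2 * L_K * (1 / L_K)\<^sup>2 = 2 * (1 / L_K)"
    using L_K by (simp add: power2_eq_square)
  ultimately show ?thesis
    using mean_sq_dist_after_step[OF L_K, of x "1 / L_K"] by (simp add: left_diff_distrib)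
qed

lemma path_mean_sq_dist_Suc:
  "path_mean Bs (Suc n) (\<lambda>v. (norm (sgd_path g K s x0 v (Suc n) - xs))\<^sup>2)
   = path_mean Bs n (\<lambda>v. (\<Sum>c\<in>Bs. (norm (sgd_path g K s x0 v n
        - s *\<^sub>R grad_batch_F c (sgd_path g K s x0 v n) - xs))\<^sup>2) / real (card Bs))"
  by (simp add: path_mean_Suc finite_batches sgd_path_fun_upd_Suc del: sgd_path.simps)

lemma sum_path_mean_gap_le:
  assumes convex: "convex_on UNIV F" and L_K: "0 < L_K"
  shows "(\<Sum>n<T. path_mean Bs n (\<lambda>v. F (sgd_path g K (1 / (2 * L_K)) x0 v n) - F xs))
    \<le> 2 * L_K * (norm (x0 - xs))\<^sup>2"
proof -
  define x where "x = sgd_path g K (1 / (2 * L_K)) x0"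
  define D where "D n = path_mean Bs n (\<lambda>v. (norm (x v n - xs))\<^sup>2)" for n
  define P where "P n = path_mean Bs n (\<lambda>v. F (x v n) - F xs)" for n
  have descent: "D (Suc n) \<le> D n - (1 / (2 * L_K)) * P n" for n
  proof -
    have "D (Suc n) \<le> path_mean Bs n (\<lambda>v. (norm (x v n - xs))\<^sup>2 - (1 / (2 * L_K)) * (F (x v n) - F xs))"
      unfolding D_def x_def path_mean_sq_dist_Suc
      by (intro path_mean_mono mean_sq_dist_after_step_convex convex L_K)
    then show ?thesis
      unfolding D_def P_def path_mean_diff path_mean_cmult .
  qed
  have telescoped: "D T + (1 / (2 * L_K)) * (\<Sum>n<T. P n) \<le> D 0" for T
  proof (induction T)
    case (Suc T)
    then show ?case
      using descent[of T] by (simp add: distrib_left)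
  qed simp
  have "0 \<le> D T"
    unfolding D_def by (rule path_mean_nonneg) simp
  with telescoped[of T] have "(1 / (2 * L_K)) * (\<Sum>n<T. P n) \<le> D 0"
    by linarith
  then show ?thesis
    using L_K unfolding P_def D_def x_def by (simp add: path_mean_0 field_simps)
qed

lemma path_mean_sq_dist_le_geometric:
  assumes convex: "strongly_convex F \<mu>" and \<mu>: "0 < \<mu>"
  shows "path_mean Bs n (\<lambda>v. (norm (sgd_path g K (1 / L_K) x0 v n - xs))\<^sup>2)
    \<le> (1 - \<mu> / L_K) ^ n * (norm (x0 - xs))\<^sup>2"
proof (induction n)
  case 0
  then show ?case by (simp add: path_mean_0)
next
  case (Suc n)
  have q: "0 \<le> 1 - \<mu> / L_K"
    using strong_convexity_le_L_K[OF convex] \<mu> by (simp add: field_simps)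
  have "path_mean Bs (Suc n) (\<lambda>v. (norm (sgd_path g K (1 / L_K) x0 v (Suc n) - xs))\<^sup>2)
      \<le> path_mean Bs n (\<lambda>v. (1 - \<mu> / L_K) * (norm (sgd_path g K (1 / L_K) x0 v n - xs))\<^sup>2)"
    unfolding path_mean_sq_dist_Suc
    by (intro path_mean_mono mean_sq_dist_after_step_strongly_convex convex \<mu>)
  also have "\<dots> \<le> (1 - \<mu> / L_K) * ((1 - \<mu> / L_K) ^ n * (norm (x0 - xs))\<^sup>2)"
    unfolding path_mean_cmult using Suc.IH q by (rule mult_left_mono)
  finally show ?case by simp
qed

lemma summable_path_mean_gap:
  assumes convex: "convex_on UNIV F" and L_K: "0 < L_K"
  shows "summable (\<lambda>n. path_mean Bs n (\<lambda>v. F (sgd_path g K (1 / (2 * L_K)) x0 v n) - F xs))"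
proof (rule summableI_nonneg_bounded)
  show "0 \<le> path_mean Bs n (\<lambda>v. F (sgd_path g K (1 / (2 * L_K)) x0 v n) - F xs)" for n
    by (rule path_mean_nonneg) (simp add: F_min)
  show "(\<Sum>i<n. path_mean Bs i (\<lambda>v. F (sgd_path g K (1 / (2 * L_K)) x0 v i) - F xs))
      \<le> 2 * L_K * (norm (x0 - xs))\<^sup>2" for n
    by (rule sum_path_mean_gap_le[OF convex L_K])
qed

lemma sgd_averaged_rate:
  assumes iid: "iid_uniform M B Bs" and convex: "convex_on UNIV F"
  shows "AE \<omega> in M. little_o_seq
    (\<lambda>n. F (avg_seq (\<lambda>m. sgd g K (1 / (2 * L_K)) x0 B m \<omega>) n) - F xs) (\<lambda>n. 1 / real n)"
proof (cases "0 < L_K")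
  case False
  then have gap: "F y - F xs = 0" for y
    using F_constant_if_L_K_nonpos[of y] by simp
  show ?thesis
    unfolding little_o_seq_def gap by (intro AE_I2 allI impI always_eventually) simp
next
  case True
  let ?x = "sgd_path g K (1 / (2 * L_K)) x0"
  have "AE \<omega> in M. summable (\<lambda>n. F (?x (\<lambda>i. B i \<omega>) n) - F xs)"
  proof (rule iid_uniform.AE_summable_if_summable_path_mean[OF iid, where H = "\<lambda>n v. F (?x v n) - F xs"])
    show "0 \<le> F (?x v n) - F xs" for n v
      by (simp add: F_min)
    show "F (?x v n) - F xs = F (?x w n) - F xs" if "\<And>i. i < n \<Longrightarrow> v i = w i" for n v w
      using that by (simp cong: sgd_path_cong)
  qed (rule summable_path_mean_gap[OF convex True])
  then show ?thesis
  proof eventually_elim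
    case (elim \<omega>)
    then show ?case
      unfolding sgd_eq_sgd_path by (rule avg_seq_little_o[OF convex F_min])
  qed
qed

lemma summable_path_mean_scaled_gap:
  assumes convex: "strongly_convex F \<mu>" and \<mu>: "0 < \<mu>" and r: "1 - \<mu> / L_K < r"
  shows "summable (\<lambda>n. path_mean Bs n (\<lambda>v. (F (sgd_path g K (1 / L_K) x0 v n) - F xs) / r ^ n))"
proof -
  let ?x = "\<lambda>v. sgd_path g K (1 / L_K) x0 v"
  define q where "q = 1 - \<mu> / L_K"
  have "0 < L_K" "\<mu> \<le> L_K"
    using strong_convexity_le_L_K[OF convex] \<mu> by auto
  then have q: "0 \<le> q"
    unfolding q_def by (simp add: field_simps)
  with r have r: "0 < r" "q / r < 1"
    unfolding q_def by (auto simp: divide_less_eq)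
  have bound: "path_mean Bs n (\<lambda>v. (F (?x v n) - F xs) / r ^ n)
      \<le> L_K / 2 * (norm (x0 - xs))\<^sup>2 * (q / r) ^ n" for n
  proof -
    have "(F (?x v n) - F xs) / r ^ n \<le> L_K / 2 / r ^ n * (norm (?x v n - xs))\<^sup>2" for v
    proof -
      have "(F (?x v n) - F xs) / r ^ n \<le> (L_K / 2 * (norm (?x v n - xs))\<^sup>2) / r ^ n"
        using r by (intro divide_right_mono F_gap_le) simp
      then show ?thesis
        by simp
    qed
    then have "path_mean Bs n (\<lambda>v. (F (?x v n) - F xs) / r ^ n)
        \<le> path_mean Bs n (\<lambda>v. L_K / 2 / r ^ n * (norm (?x v n - xs))\<^sup>2)"
      by (rule path_mean_mono)
    also have "\<dots> = L_K / 2 / r ^ n * path_mean Bs n (\<lambda>v. (norm (?x v n - xs))\<^sup>2)"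
      by (rule path_mean_cmult)
    also have "\<dots> \<le> L_K / 2 / r ^ n * (q ^ n * (norm (x0 - xs))\<^sup>2)"
      using path_mean_sq_dist_le_geometric[OF convex \<mu>, of n x0] \<open>0 < L_K\<close> r
      unfolding q_def by (intro mult_left_mono) simp_all
    also have "\<dots> = L_K / 2 * (norm (x0 - xs))\<^sup>2 * (q / r) ^ n"
      by (simp add: power_divide)
    finally show ?thesis .
  qed
  have "summable (\<lambda>n. L_K / 2 * (norm (x0 - xs))\<^sup>2 * (q / r) ^ n)"
    using q r by (intro summable_mult summable_geometric) simp
  moreover have "norm (path_mean Bs n (\<lambda>v. (F (?x v n) - F xs) / r ^ n))
      \<le> L_K / 2 * (norm (x0 - xs))\<^sup>2 * (q / r) ^ n" for n
  proof -
    have "0 \<le> path_mean Bs n (\<lambda>v. (F (?x v n) - F xs) / r ^ n)"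
      using r by (intro path_mean_nonneg) (simp add: F_min)
    with bound[of n] show ?thesis by simp
  qed
  ultimately show ?thesis
    by (rule summable_comparison_test')
qed

lemma sgd_linear_rate:
  assumes iid: "iid_uniform M B Bs" and convex: "strongly_convex F \<mu>"
    and \<mu>: "0 < \<mu>" and \<epsilon>: "0 < \<epsilon>"
  shows "AE \<omega> in M. little_o_seq
    (\<lambda>n. F (sgd g K (1 / L_K) x0 B n \<omega>) - F xs) (\<lambda>n. (1 - \<mu> / L_K + \<epsilon>) ^ n)"
proof -
  let ?x = "sgd_path g K (1 / L_K) x0"
  define r where "r = 1 - \<mu> / L_K + \<epsilon>"
  have "\<mu> \<le> L_K" "0 < L_K"
    using strong_convexity_le_L_K[OF convex] \<mu> by auto
  then have "0 \<le> 1 - \<mu> / L_K"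
    by (simp add: field_simps)
  then have r: "0 < r" "1 - \<mu> / L_K < r"
    unfolding r_def using \<epsilon> by simp_all
  have "AE \<omega> in M. summable (\<lambda>n. (F (?x (\<lambda>i. B i \<omega>) n) - F xs) / r ^ n)"
  proof (rule iid_uniform.AE_summable_if_summable_path_mean[OF iid, where H = "\<lambda>n v. (F (?x v n) - F xs) / r ^ n"])
    show "0 \<le> (F (?x v n) - F xs) / r ^ n" for n v
      using r by (simp add: F_min)
    show "(F (?x v n) - F xs) / r ^ n = (F (?x w n) - F xs) / r ^ n"
      if "\<And>i. i < n \<Longrightarrow> v i = w i" for n v w
      using that by (simp cong: sgd_path_cong)
  qed (rule summable_path_mean_scaled_gap[OF convex \<mu> r(2)])
  then show ?thesis
  proof eventually_elim
    case (elim \<omega>)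
    then have "(\<lambda>n. (F (sgd g K (1 / L_K) x0 B n \<omega>) - F xs) / r ^ n) \<longlonglongrightarrow> 0"
      unfolding sgd_eq_sgd_path by (rule summable_LIMSEQ_zero)
    moreover have "\<forall>\<^sub>F n in sequentially. 0 < r ^ n"
      using r by simp
    ultimately show ?case
      unfolding r_def by (rule little_o_seq_if_tendsto_zero)
  qed
qed

end

theorem theorem2:
  fixes M :: "'w measure"
    and f :: "nat \<Rightarrow> 'v::euclidean_space \<Rightarrow> real"
    and g :: "nat \<Rightarrow> 'v \<Rightarrow> 'v"
    and L :: "nat \<Rightarrow> real"
    and N K :: nat
    and x0 xs :: 'v
    and B :: "nat \<Rightarrow> 'w \<Rightarrow> nat set"
  defines "F \<equiv> (\<lambda>x. (1 / real N) * (\<Sum>i=1..N. f i x))"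
  assumes N2: "N \<ge> 2"
    and K: "1 \<le> K" "K \<le> N"
    and grad: "\<And>i x. i \<in> {1..N} \<Longrightarrow> (f i has_derivative (\<lambda>h. g i x \<bullet> h)) (at x)"
    and grad_cont: "\<And>i. i \<in> {1..N} \<Longrightarrow> continuous_on UNIV (g i)"
    and L_nonneg: "\<And>i. i \<in> {1..N} \<Longrightarrow> L i \<ge> 0"
    and lipschitz: "\<And>i x y. i \<in> {1..N} \<Longrightarrow> norm (g i x - g i y) \<le> L i * norm (x - y)"
    and xs_min: "\<And>y. F xs \<le> F y"
    and interp: "\<And>i y. i \<in> {1..N} \<Longrightarrow> f i xs \<le> f i y"
    and P: "prob_space M"
    and B_indep: "prob_space.indep_vars M (\<lambda>_. count_space UNIV) B UNIV"
    and B_unif: "\<And>n. distr M (count_space UNIV) (B n) = measure_pmf (pmf_of_set (batches N K))"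
  shows
    "(convex_on UNIV F \<longrightarrow>
        (AE \<omega> in M. little_o_seq
            (\<lambda>n. F (avg_seq (\<lambda>m. sgd g K (1 / (2 * LK L N K)) x0 B m \<omega>) n) - F xs)
            (\<lambda>n. 1 / real n)))
   \<and> (\<forall>\<mu>>0. strongly_convex F \<mu> \<longrightarrow>
        (\<forall>\<epsilon>'>0. AE \<omega> in M. little_o_seq
            (\<lambda>n. F (sgd g K (1 / LK L N K) x0 B n \<omega>) - F xs)
            (\<lambda>n. (1 - \<mu> / LK L N K + \<epsilon>') ^ n)))"
proof -
  interpret S: finite_sum_interpolation f g L N K xs
    using K grad lipschitz interp by unfold_locales auto
  have F_eq: "S.F = F"
    by (simp add: F_def S.F_def fun_eq_iff)
  have iid: "iid_uniform M B (batches N K)"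
    using P B_indep B_unif finite_batches batches_nonempty[OF K(2)]
    by (simp add: iid_uniform_def iid_uniform_axioms_def)
  show ?thesis
    using S.sgd_averaged_rate[OF iid] S.sgd_linear_rate[OF iid] unfolding F_eq by blast
qed

end
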